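(* Let $d,k\ge 1$, let $w_1,\dots,w_k>0$ with $w_{\max}:=\max_i w_i$, and let $a_i,b_i,c_i\in\mathbb{R}^d$ ($i\in[k]$) be unit vectors. Set $T=\sum_{i\in[k]} w_i\, a_i\otimes b_i\otimes c_i$, $A=[a_1\cdots a_k]$, $B=[b_1\cdots b_k]$, $C=[c_1\cdots c_k]\in\mathbb{R}^{d\times k}$. Let $\alpha>0$ and $\alpha_0>0$ be parameters such that: (i) $\max_{i\ne j}\max\{|\langle a_i,a_j\rangle|,|\langle b_i,b_j\rangle|,|\langle c_i,c_j\rangle|\}\le \alpha/\sqrt d$; (ii) $\max\{\|A\|,\|B\|,\|C\|\}\le 1+\alpha_0\sqrt{k/d}$; (iii) $\|T\|\le \alpha_0 w_{\max}$ and, for every $j\in[k]$, $\big\|\sum_{i\ne j} w_i\langle a_i,a_j\rangle\langle b_i,b_j\rangle c_i\big\|\le \alpha\, w_{\max}\sqrt k/d$. Let $\Psi\in\mathbb{R}^{d\times d\times d}$ be any tensor, $\psi:=\|\Psi\|$, and $\hat T=T+\Psi$. Fix $j\in[k]$ and unit vectors $\hat a,\hat b$ with $\mathrm{dist}(\hat a,a_j)\le\epsilon_a$ and $\mathrm{dist}(\hat b,b_j)\le \epsilon_b$; set $\epsilon:=\max\{\epsilon_a,\epsilon_b\}$ and $$f(\epsilon;k,d):=\alpha\frac{\sqrt k}{d}+\frac{2\alpha}{\sqrt d}\Big(1+\alpha_0\sqrt{\tfrac kd}\Big)^2\epsilon+\alpha_0\epsilon^2 .$$ Suppose $w_j-w_j\epsilon^2-w_{\max}f(\epsilon;k,d)-\psi>0$.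 Let $\hat c:=\hat T(\hat a,\hat b,I)/\|\hat T(\hat a,\hat b,I)\|$. Then $$\mathrm{dist}(\hat c,c_j)\le \frac{w_{\max}f(\epsilon;k,d)+\psi}{w_j-w_j\epsilon^2-w_{\max}f(\epsilon;k,d)-\psi}.$$ Moreover, if this bound satisfies $\mathrm{dist}(\hat c,c_j)\le\epsilon$, then $\hat w:=\hat T(\hat a,\hat b,\hat c)$ satisfies $|\hat w-w_j|\le 2w_j\epsilon^2+w_{\max}f(\epsilon;k,d)+\psi$.
   Context: For a third order tensor $T\in\mathbb{R}^{d\times d\times d}$ and vectors $u,v,w$, the multilinear form is $T(u,v,w)=\sum_{i,j,l}T_{ijl}u_iv_jw_l$, and $T(u,v,I)\in\mathbb{R}^d$ is the vector with $l$-th entry $\sum_{i,j}T_{ijl}u_iv_j$ (similarly $T(I,v,w)$, $T(u,I,w)$). The tensor spectral norm is $\|T\|=\sup_{\|u\|=\|v\|=\|w\|=1}|T(u,v,w)|$. For matrices $\|\cdot\|$ is the spectral norm. For nonzero $u,v\in\mathbb{R}^d$, $\mathrm{dist}(u,v):=\sup_{z\perp u}\frac{\langle z,v\rangle}{\|z\|\|v\|}$. *)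

theory Defs
  imports "HOL-Analysis.Analysis"
begin

type_synonym 'd tensor3 = "'d \<Rightarrow> 'd \<Rightarrow> 'd \<Rightarrow> real"

definition tform :: "('d::finite) tensor3 \<Rightarrow> real^'d \<Rightarrow> real^'d \<Rightarrow> real^'d \<Rightarrow> real" where
  "tform T u v w = (\<Sum>i\<in>UNIV. \<Sum>j\<in>UNIV. \<Sum>l\<in>UNIV. T i j l * u$i * v$j * w$l)"

definition tvec12 :: "('d::finite) tensor3 \<Rightarrow> real^'d \<Rightarrow> real^'d \<Rightarrow> real^'d" where
  "tvec12 T u v = (\<chi> l. \<Sum>i\<in>UNIV. \<Sum>j\<in>UNIV. T i j l * u$i * v$j)"

definition tnorm :: "('d::finite) tensor3 \<Rightarrow> real" where
  "tnorm T = Sup {\<bar>tform T u v w\<bar> | u v w. norm u = 1 \<and> norm v = 1 \<and> norm w = 1}"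

definition outer3 :: "real^'d \<Rightarrow> real^'d \<Rightarrow> real^'d \<Rightarrow> ('d::finite) tensor3" where
  "outer3 a b c = (\<lambda>i j l. a$i * b$j * c$l)"

definition colmat :: "('k::finite \<Rightarrow> real^'d) \<Rightarrow> real^'k^'d" where
  "colmat a = (\<chi> r. \<chi> i. a i $ r)"

definition matnorm :: "real^'k^'d \<Rightarrow> real" where
  "matnorm M = onorm (\<lambda>x. M *v x)"

text \<open>dist(u,v) = sup over z orthogonal to u of <z,v>/(|z||v|); z = 0 contributes 0
  (Isabelle division by zero), which does not change the supremum (always >= 0).\<close>
definition vdist :: "'a::real_inner \<Rightarrow> 'a \<Rightarrow> real" where
  "vdist u v = Sup {inner z v / (norm z * norm v) | z. inner z u = 0}"

definition cpd :: "('k::finite \<Rightarrow> real) \<Rightarrow> ('k \<Rightarrow> real^'d) \<Rightarrow> ('k \<Rightarrow> real^'d) \<Rightarrow> ('k \<Rightarrow> real^'d) \<Rightarrow> ('d::finite) tensor3" where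
  "cpd w a b c = (\<lambda>p q r. \<Sum>i\<in>UNIV. w i * outer3 (a i) (b i) (c i) p q r)"

definition tadd :: "('d::finite) tensor3 \<Rightarrow> 'd tensor3 \<Rightarrow> 'd tensor3" where
  "tadd S U = (\<lambda>p q r. S p q r + U p q r)"

definition ferr :: "real \<Rightarrow> real \<Rightarrow> nat \<Rightarrow> nat \<Rightarrow> real \<Rightarrow> real" where
  "ferr \<alpha> \<alpha>0 k d \<epsilon> =
     \<alpha> * sqrt (real k) / real d
     + (2 * \<alpha> / sqrt (real d)) * (1 + \<alpha>0 * sqrt (real k / real d))^2 * \<epsilon>
     + \<alpha>0 * \<epsilon>^2"

end

theory Submission
  imports Defs
begin

text \<open>
  Write \<open>ah = x a j + u\<close> and \<open>bh = y b j + p\<close> with \<open>u\<close> orthogonal to \<open>a j\<close> and \<open>p\<close>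
  orthogonal to \<open>b j\<close>; the distance hypotheses give \<open>norm u, norm p \<le> \<epsilon>\<close> and
  \<open>x\<^sup>2, y\<^sup>2 \<ge> 1 - \<epsilon>\<^sup>2\<close>. By bilinearity the contraction of \<open>T + \<Psi>\<close> with \<open>ah, bh\<close> is
  \<open>w j x y c j + e\<close>, where \<open>e\<close> collects the off-diagonal part of \<open>T(a j, b j, I)\<close>, the cross
  terms \<open>T(a j, p, I)\<close> and \<open>T(u, b j, I)\<close> (small by incoherence and the bound on the column
  matrices), \<open>T(u, p, I)\<close> (at most \<open>tnorm T * \<epsilon>\<^sup>2\<close>) and \<open>\<Psi>(ah, bh, I)\<close> (at most \<open>\<psi>\<close>);
  altogether \<open>norm e \<le> wmax * f + \<psi>\<close>. A vector \<open>m c + e\<close> is within angular distance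
  \<open>norm e / \<bar>m\<bar>\<close> of the unit vector \<open>c\<close>, and contracting once more with the normalised vector
  just returns its norm, which lies within \<open>norm e\<close> of \<open>\<bar>w j x y\<bar> \<in> [w j (1 - \<epsilon>\<^sup>2), w j]\<close>.
\<close>

section \<open>Contractions of third-order tensors\<close>

lemma tvec12_add_left: "tvec12 S (u + u') v = tvec12 S u v + tvec12 S u' v"
  by (simp add: tvec12_def vec_eq_iff algebra_simps sum.distrib)

lemma tvec12_add_right: "tvec12 S u (v + v') = tvec12 S u v + tvec12 S u v'"
  by (simp add: tvec12_def vec_eq_iff algebra_simps sum.distrib)

lemma tvec12_scaleR_left: "tvec12 S (r *\<^sub>R u) v = r *\<^sub>R tvec12 S u v"
  by (simp add: tvec12_def vec_eq_iff sum_distrib_left mult_ac)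

lemma tvec12_scaleR_right: "tvec12 S u (r *\<^sub>R v) = r *\<^sub>R tvec12 S u v"
  by (simp add: tvec12_def vec_eq_iff sum_distrib_left mult_ac)

lemma tvec12_zero_left: "tvec12 S 0 v = 0"
  by (simp add: tvec12_def vec_eq_iff)

lemma tvec12_zero_right: "tvec12 S u 0 = 0"
  by (simp add: tvec12_def vec_eq_iff)

lemma tvec12_tadd: "tvec12 (tadd S U) u v = tvec12 S u v + tvec12 U u v"
  by (simp add: tvec12_def tadd_def vec_eq_iff algebra_simps sum.distrib)

lemma sum_rotate3:
  "(\<Sum>i\<in>A. \<Sum>j\<in>B. \<Sum>l\<in>C. f i j l) = (\<Sum>l\<in>C. \<Sum>i\<in>A. \<Sum>j\<in>B. f i j l)"
proof -
  have "(\<Sum>i\<in>A. \<Sum>j\<in>B. \<Sum>l\<in>C. f i j l) = (\<Sum>i\<in>A. \<Sum>l\<in>C. \<Sum>j\<in>B. f i j l)"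
    by (intro sum.cong refl sum.swap)
  also have "\<dots> = (\<Sum>l\<in>C. \<Sum>i\<in>A. \<Sum>j\<in>B. f i j l)"
    by (rule sum.swap)
  finally show ?thesis .
qed

lemma tform_eq_inner_tvec12: "tform S u v z = tvec12 S u v \<bullet> z"
  unfolding tform_def tvec12_def inner_vec_def
  by (subst sum_rotate3) (simp add: sum_distrib_right)

lemma tform_sgn_tvec12: "tform S u v (sgn (tvec12 S u v)) = norm (tvec12 S u v)"
  by (cases "tvec12 S u v = 0")
     (simp_all add: tform_eq_inner_tvec12 sgn_div_norm dot_square_norm power2_eq_square)

lemma bdd_above_tform_unit:
  "bdd_above {\<bar>tform T u v w\<bar> | u v w. norm u = 1 \<and> norm v = 1 \<and> norm w = 1}"
proof (rule bdd_aboveI, safe)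
  fix u v w :: "real^'a" assume "norm u = 1" "norm v = 1" "norm w = 1"
  then have "\<bar>u$i\<bar> * \<bar>v$j\<bar> * \<bar>w$l\<bar> \<le> 1" for i j l
    by (metis component_le_norm_cart abs_ge_zero mult_le_one)
  then have "\<bar>T i j l\<bar> * (\<bar>u$i\<bar> * \<bar>v$j\<bar> * \<bar>w$l\<bar>) \<le> \<bar>T i j l\<bar> * 1" for i j l
    by (intro mult_left_mono) auto
  then have "\<bar>T i j l * u$i * v$j * w$l\<bar> \<le> \<bar>T i j l\<bar>" for i j l
    by (simp add: abs_mult mult_ac)
  then show "\<bar>tform T u v w\<bar> \<le> (\<Sum>i\<in>UNIV. \<Sum>j\<in>UNIV. \<Sum>l\<in>UNIV. \<bar>T i j l\<bar>)"
    unfolding tform_def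
    by (intro order_trans[OF sum_abs] sum_mono order_trans[OF sum_abs] sum_abs[THEN order_trans])
qed

lemma tform_le_tnorm:
  "norm u = 1 \<Longrightarrow> norm v = 1 \<Longrightarrow> norm z = 1 \<Longrightarrow> \<bar>tform T u v z\<bar> \<le> tnorm T"
  unfolding tnorm_def by (rule cSup_upper[OF _ bdd_above_tform_unit]) blast

lemma tnorm_nonneg: "0 \<le> tnorm (T :: ('a::finite) tensor3)"
proof -
  obtain z :: "real^'a" where "norm z = 1"
    using vector_choose_size[of 1] by auto
  then show ?thesis
    using tform_le_tnorm[of z z z T] by linarith
qed

lemma norm_tvec12_le_tnorm_unit:
  assumes "norm u = 1" "norm v = 1"
  shows "norm (tvec12 T u v) \<le> tnorm T"
proof (cases "tvec12 T u v = 0")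
  case True
  then show ?thesis
    by (simp add: tnorm_nonneg)
next
  case False
  then have "norm (sgn (tvec12 T u v)) = 1"
    by (simp add: norm_sgn)
  with tform_le_tnorm[OF assms this, of T] show ?thesis
    by (simp add: tform_sgn_tvec12)
qed

lemma norm_tvec12_le: "norm (tvec12 T u v) \<le> tnorm T * norm u * norm v"
proof (cases "u = 0 \<or> v = 0")
  case True
  then show ?thesis by (auto simp: tvec12_zero_left tvec12_zero_right)
next
  case False
  have "u = norm u *\<^sub>R sgn u" "v = norm v *\<^sub>R sgn v"
    using False by (auto simp: sgn_div_norm)
  then have "tvec12 T u v = (norm u * norm v) *\<^sub>R tvec12 T (sgn u) (sgn v)"
    by (metis tvec12_scaleR_left tvec12_scaleR_right scaleR_scaleR mult.commute)
  then have "norm (tvec12 T u v) = norm u * norm v * norm (tvec12 T (sgn u) (sgn v))"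
    by simp
  also have "\<dots> \<le> norm u * norm v * tnorm T"
    using False by (intro mult_left_mono norm_tvec12_le_tnorm_unit) (auto simp: norm_sgn)
  finally show ?thesis
    by (simp add: mult_ac)
qed

lemma norm_tvec12_tadd_diff_le:
  assumes "norm u = 1" "norm v = 1"
  shows "norm (tvec12 (tadd S U) u v - z) \<le> norm (tvec12 S u v - z) + tnorm U"
proof -
  have "norm (tvec12 (tadd S U) u v - z) = norm ((tvec12 S u v - z) + tvec12 U u v)"
    by (simp add: tvec12_tadd algebra_simps)
  also have "\<dots> \<le> norm (tvec12 S u v - z) + tnorm U"
    using norm_triangle_ineq[of "tvec12 S u v - z" "tvec12 U u v"] norm_tvec12_le_tnorm_unit[OF assms, of U]
    by linarith
  finally show ?thesis .
qed

section \<open>The angular distance\<close>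

lemma bdd_above_vdist_set: "bdd_above {inner z v / (norm z * norm v) | z. inner z u = 0}"
proof (rule bdd_aboveI, safe)
  fix z
  show "inner z v / (norm z * norm v) \<le> 1"
    using norm_cauchy_schwarz[of z v]
    by (cases "norm z * norm v = 0") (auto simp: divide_le_eq_1)
qed

lemma norm_reject_sq:
  fixes u v :: "'a::real_inner"
  assumes "norm u = 1" "norm v = 1"
  shows "(norm (v - (u \<bullet> v) *\<^sub>R u))\<^sup>2 = 1 - (u \<bullet> v)\<^sup>2"
proof -
  have "u \<bullet> u = 1" "v \<bullet> v = 1"
    using assms by (simp_all add: dot_square_norm)
  then show ?thesis
    unfolding power2_norm_eq_inner inner_diff_left inner_diff_right inner_scaleR_left
      inner_scaleR_right inner_commute[of v u]
    by (simp add: power2_eq_square)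
qed

lemma norm_reject_le_vdist:
  fixes u v :: "'a::real_inner"
  assumes "norm u = 1" "norm v = 1"
  shows "norm (v - (u \<bullet> v) *\<^sub>R u) \<le> vdist u v"
proof -
  define z where "z = v - (u \<bullet> v) *\<^sub>R u"
  have "u \<bullet> u = 1"
    using assms(1) by (simp add: dot_square_norm)
  then have "z \<bullet> u = 0"
    by (simp add: z_def inner_diff_left inner_commute[of v u])
  moreover have "z \<bullet> v = z \<bullet> z"
    using \<open>z \<bullet> u = 0\<close> by (simp add: z_def inner_diff_right inner_commute)
  then have "inner z v / (norm z * norm v) = norm z"
    using assms(2) by (cases "z = 0") (simp_all add: dot_square_norm power2_eq_square)
  ultimately show ?thesis
    unfolding vdist_def z_def[symmetric] by (metis (mono_tags, lifting) cSup_upper bdd_above_vdist_set mem_Collect_eq)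
qed

lemma orthogonal_split_of_vdist_le:
  fixes u a :: "'a::real_inner"
  assumes "norm u = 1" "norm a = 1" "vdist u a \<le> \<epsilon>"
  shows "a \<bullet> (u - (a \<bullet> u) *\<^sub>R a) = 0"
    and "norm (u - (a \<bullet> u) *\<^sub>R a) \<le> \<epsilon>"
    and "1 - \<epsilon>\<^sup>2 \<le> (a \<bullet> u)\<^sup>2"
proof -
  show "a \<bullet> (u - (a \<bullet> u) *\<^sub>R a) = 0"
    using assms(2) by (simp add: inner_diff_right dot_square_norm)
  have "(norm (u - (a \<bullet> u) *\<^sub>R a))\<^sup>2 = (norm (a - (u \<bullet> a) *\<^sub>R u))\<^sup>2"
    using norm_reject_sq[OF assms(1,2)] norm_reject_sq[OF assms(2,1)] by (metis inner_commute)
  then have "norm (u - (a \<bullet> u) *\<^sub>R a) = norm (a - (u \<bullet> a) *\<^sub>R u)"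
    by (simp add: power2_eq_iff_nonneg)
  also have "\<dots> \<le> \<epsilon>"
    using norm_reject_le_vdist[OF assms(1,2)] assms(3) by linarith
  finally show "norm (u - (a \<bullet> u) *\<^sub>R a) \<le> \<epsilon>" .
  then have "(norm (u - (a \<bullet> u) *\<^sub>R a))\<^sup>2 \<le> \<epsilon>\<^sup>2"
    by (simp add: power_mono)
  then show "1 - \<epsilon>\<^sup>2 \<le> (a \<bullet> u)\<^sup>2"
    using norm_reject_sq[OF assms(2,1)] by linarith
qed

lemma vdist_sgn_le:
  fixes v c e :: "'a::real_inner"
  assumes "v = m *\<^sub>R c + e" "m \<noteq> 0" "norm c = 1"
  shows "vdist (sgn v) c \<le> norm e / \<bar>m\<bar>"
  unfolding vdist_def
proof (rule cSup_least)
  have "inner 0 (sgn v) = 0"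
    by simp
  then show "{inner z c / (norm z * norm c) |z. inner z (sgn v) = 0} \<noteq> {}"
    by blast
next
  fix t assume "t \<in> {inner z c / (norm z * norm c) |z. inner z (sgn v) = 0}"
  then obtain z where t: "t = inner z c / norm z" and "inner z (sgn v) = 0"
    using assms(3) by auto
  then have "inner z v = 0"
    by (cases "v = 0") (auto simp: sgn_div_norm)
  then have "m * inner z c = - inner z e"
    using assms(1) by (simp add: inner_add_right)
  then have "\<bar>m\<bar> * inner z c \<le> norm z * norm e"
    by (metis Cauchy_Schwarz_ineq2 abs_ge_self abs_minus_cancel abs_mult dual_order.trans
        mult_left_mono abs_ge_zero)
  then have "inner z c \<le> norm z * (norm e / \<bar>m\<bar>)"
    using assms(2) by (simp add: pos_le_divide_eq mult.commute)
  then show "t \<le> norm e / \<bar>m\<bar>"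
    using t by (cases "z = 0") (simp_all add: divide_le_eq mult.commute)
qed

lemma one_minus_le_abs_mult:
  fixes x y e :: real
  assumes "1 - e \<le> x\<^sup>2" "1 - e \<le> y\<^sup>2"
  shows "1 - e \<le> \<bar>x * y\<bar>"
proof (cases "1 - e \<le> 0")
  case True
  then show ?thesis
    using abs_ge_zero[of "x * y"] by linarith
next
  case False
  then have "(1 - e) * (1 - e) \<le> x\<^sup>2 * y\<^sup>2"
    using assms by (intro mult_mono) auto
  then have "(1 - e)\<^sup>2 \<le> \<bar>x * y\<bar>\<^sup>2"
    by (simp add: power2_eq_square power_mult_distrib mult_ac)
  then show ?thesis
    by (rule power2_le_imp_le) simp
qed

lemma scaled_unit_plus_error_bounds:
  fixes v c e :: "'a::real_inner"
  assumes v: "v = m *\<^sub>R c + e" and c: "norm c = 1" and e: "norm e \<le> E"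
    and m: "W - W * \<delta> \<le> \<bar>m\<bar>" "\<bar>m\<bar> \<le> W" and "0 \<le> \<delta>"
    and gap: "0 < W - W * \<delta> - E"
  shows "vdist (sgn v) c \<le> E / (W - W * \<delta> - E)"
    and "\<bar>norm v - W\<bar> \<le> 2 * W * \<delta> + E"
proof -
  have "0 \<le> E"
    using e norm_ge_zero[of e] by linarith
  then have "m \<noteq> 0"
    using m gap by auto
  have "vdist (sgn v) c \<le> norm e / \<bar>m\<bar>"
    using v \<open>m \<noteq> 0\<close> c by (rule vdist_sgn_le)
  also have "\<dots> \<le> E / \<bar>m\<bar>"
    using e by (simp add: divide_right_mono)
  also have "\<dots> \<le> E / (W - W * \<delta> - E)"
    using \<open>0 \<le> E\<close> gap m by (intro divide_left_mono) auto
  finally show "vdist (sgn v) c \<le> E / (W - W * \<delta> - E)" .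
  have "\<bar>norm v - \<bar>m\<bar>\<bar> \<le> norm e"
    using norm_triangle_ineq3[of v "m *\<^sub>R c"] v c by simp
  moreover have "0 \<le> W * \<delta>"
    using m \<open>0 \<le> \<delta>\<close> by simp
  ultimately show "\<bar>norm v - W\<bar> \<le> 2 * W * \<delta> + E"
    using m e by linarith
qed

section \<open>Column matrices\<close>

lemma matnorm_nonneg: "0 \<le> matnorm M"
  unfolding matnorm_def by (intro onorm_pos_le matrix_vector_mul_bounded_linear)

lemma norm_matrix_vector_mult_le: "norm (M *v x) \<le> matnorm M * norm x"
  unfolding matnorm_def by (intro onorm matrix_vector_mul_bounded_linear)

lemma colmat_mult_vec: "colmat c *v g = (\<Sum>i\<in>UNIV. (g $ i) *\<^sub>R c i)"
  by (simp add: colmat_def matrix_vector_mult_def vec_eq_iff sum_component mult.commute)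

lemma norm_inner_columns_le:
  fixes b :: "'k::finite \<Rightarrow> real^'d::finite"
  shows "norm (\<chi> i. b i \<bullet> q) \<le> matnorm (colmat b) * norm q"
proof -
  define g where "g = (\<chi> i. b i \<bullet> q)"
  have "(norm g)\<^sup>2 = (\<Sum>i\<in>UNIV. g $ i * (b i \<bullet> q))"
    unfolding power2_norm_eq_inner inner_vec_def[of g g] by (simp add: g_def)
  also have "\<dots> = (colmat b *v g) \<bullet> q"
    by (simp add: colmat_mult_vec inner_sum_left)
  also have "\<dots> \<le> norm (colmat b *v g) * norm q"
    by (rule norm_cauchy_schwarz)
  also have "\<dots> \<le> matnorm (colmat b) * norm g * norm q"
    by (intro mult_right_mono norm_matrix_vector_mult_le norm_ge_zero)
  finally have "norm g * norm g \<le> norm g * (matnorm (colmat b) * norm q)"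
    by (simp add: power2_eq_square mult_ac)
  then show ?thesis
    using matnorm_nonneg[of "colmat b"] by (cases "g = 0") (auto simp: g_def)
qed

lemma norm_le_of_abs_component_le:
  fixes g h :: "real^'n"
  assumes "\<And>i. \<bar>g $ i\<bar> \<le> K * \<bar>h $ i\<bar>" "0 \<le> K"
  shows "norm g \<le> K * norm h"
proof -
  have "norm g = L2_set (\<lambda>i. \<bar>g $ i\<bar>) UNIV"
    by (simp add: norm_vec_def)
  also have "\<dots> \<le> L2_set (\<lambda>i. K * \<bar>h $ i\<bar>) UNIV"
    by (rule L2_set_mono) (use assms in auto)
  also have "\<dots> = K * norm h"
    using assms(2) by (simp add: L2_set_right_distrib norm_vec_def)
  finally show ?thesis .
qed

lemma norm_offdiag_sum_le:
  fixes b c :: "'k::finite \<Rightarrow> real^'d::finite"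
  assumes "\<And>i. i \<noteq> j \<Longrightarrow> \<bar>h i\<bar> \<le> K" "0 \<le> K"
    and "matnorm (colmat b) \<le> M" "matnorm (colmat c) \<le> M"
  shows "norm (\<Sum>i\<in>UNIV - {j}. (h i * (b i \<bullet> q)) *\<^sub>R c i) \<le> M\<^sup>2 * K * norm q"
proof -
  define g :: "real^'k" where "g = (\<chi> i. if i = j then 0 else h i * (b i \<bullet> q))"
  have "colmat c *v g = (\<Sum>i\<in>UNIV - {j}. (g $ i) *\<^sub>R c i)"
    by (simp add: colmat_mult_vec sum.remove[of UNIV j] g_def)
  also have "\<dots> = (\<Sum>i\<in>UNIV - {j}. (h i * (b i \<bullet> q)) *\<^sub>R c i)"
    by (intro sum.cong) (auto simp: g_def)
  finally have sum_eq: "(\<Sum>i\<in>UNIV - {j}. (h i * (b i \<bullet> q)) *\<^sub>R c i) = colmat c *v g"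
    by simp
  have "norm g \<le> K * norm (\<chi> i. b i \<bullet> q)"
    using assms(1,2) by (intro norm_le_of_abs_component_le) (auto simp: g_def abs_mult intro: mult_right_mono)
  also have "\<dots> \<le> K * (M * norm q)"
    using norm_inner_columns_le[of b q] assms(2,3)
    by (meson mult_left_mono mult_right_mono norm_ge_zero order_trans)
  finally have "norm g \<le> K * (M * norm q)" .
  then have "norm (colmat c *v g) \<le> M * (K * (M * norm q))"
    using norm_matrix_vector_mult_le[of "colmat c" g] assms(4)
    by (meson matnorm_nonneg mult_mono norm_ge_zero order_trans)
  then show ?thesis
    by (simp add: sum_eq power2_eq_square mult_ac)
qed

section \<open>Contracting a CP tensor near one of its components\<close>

lemma tvec12_cpd:
  "tvec12 (cpd w a b c) u v = (\<Sum>i\<in>UNIV. (w i * (a i \<bullet> u) * (b i \<bullet> v)) *\<^sub>R c i)"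
proof -
  have "(\<Sum>p\<in>UNIV. \<Sum>q\<in>UNIV. (\<Sum>i\<in>UNIV. w i * (a i $ p * b i $ q * c i $ l)) * u $ p * v $ q)
      = (\<Sum>p\<in>UNIV. \<Sum>q\<in>UNIV. \<Sum>i\<in>UNIV. w i * (a i $ p * u $ p) * (b i $ q * v $ q) * c i $ l)"
    for l by (simp add: sum_distrib_left sum_distrib_right mult_ac)
  also have "\<dots> l = (\<Sum>i\<in>UNIV. \<Sum>p\<in>UNIV. \<Sum>q\<in>UNIV. w i * (a i $ p * u $ p) * (b i $ q * v $ q) * c i $ l)"
    for l by (rule sum_rotate3)
  also have "\<dots> l = (\<Sum>i\<in>UNIV. w i * (\<Sum>p\<in>UNIV. a i $ p * u $ p) * (\<Sum>q\<in>UNIV. b i $ q * v $ q) * c i $ l)"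
    for l by (simp add: sum_product sum_distrib_left mult_ac)
  finally show ?thesis
    by (simp add: tvec12_def cpd_def outer3_def vec_eq_iff inner_vec_def sum_component)
qed

lemma tvec12_cpd_remove:
  "tvec12 (cpd w a b c) u v = (w j * (a j \<bullet> u) * (b j \<bullet> v)) *\<^sub>R c j
     + (\<Sum>i\<in>UNIV - {j}. (w i * (a i \<bullet> u) * (b i \<bullet> v)) *\<^sub>R c i)"
  by (simp add: tvec12_cpd sum.remove)

lemma norm_tvec12_cpd_perturbed_le:
  fixes w :: "'k::finite \<Rightarrow> real" and a b c :: "'k \<Rightarrow> real^'d::finite"
  defines "T \<equiv> cpd w a b c"
  assumes unit: "norm (a j) = 1" "norm (b j) = 1"
    and orth: "a j \<bullet> u = 0" "b j \<bullet> p = 0"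
    and coeffs: "\<bar>x\<bar> \<le> 1" "\<bar>y\<bar> \<le> 1"
    and small: "norm u \<le> \<epsilon>" "norm p \<le> \<epsilon>"
    and incoh: "\<And>i. i \<noteq> j \<Longrightarrow> \<bar>w i * (a i \<bullet> a j)\<bar> \<le> K"
      "\<And>i. i \<noteq> j \<Longrightarrow> \<bar>w i * (b i \<bullet> b j)\<bar> \<le> K" "0 \<le> K"
    and matn: "matnorm (colmat a) \<le> M" "matnorm (colmat b) \<le> M" "matnorm (colmat c) \<le> M"
  shows "norm (tvec12 T (x *\<^sub>R a j + u) (y *\<^sub>R b j + p) - (w j * x * y) *\<^sub>R c j)
    \<le> norm (\<Sum>i\<in>UNIV - {j}. (w i * (a i \<bullet> a j) * (b i \<bullet> b j)) *\<^sub>R c i)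
       + 2 * M\<^sup>2 * K * \<epsilon> + tnorm T * \<epsilon>\<^sup>2"
proof -
  define S0 where "S0 = (\<Sum>i\<in>UNIV - {j}. (w i * (a i \<bullet> a j) * (b i \<bullet> b j)) *\<^sub>R c i)"
  define S1 where "S1 = (\<Sum>i\<in>UNIV - {j}. (w i * (a i \<bullet> a j) * (b i \<bullet> p)) *\<^sub>R c i)"
  define S2 where "S2 = (\<Sum>i\<in>UNIV - {j}. (w i * (b i \<bullet> b j) * (a i \<bullet> u)) *\<^sub>R c i)"
  have "a j \<bullet> a j = 1" "b j \<bullet> b j = 1"
    using unit by (simp_all add: dot_square_norm)
  then have "tvec12 T (a j) (b j) = w j *\<^sub>R c j + S0"
    "tvec12 T (a j) p = S1" "tvec12 T u (b j) = S2"
    using orth unfolding T_def S0_def S1_def S2_def tvec12_cpd_remove[where j = j]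
    by (simp_all add: inner_commute mult_ac)
  then have error_eq: "tvec12 T (x *\<^sub>R a j + u) (y *\<^sub>R b j + p) - (w j * x * y) *\<^sub>R c j
      = (x * y) *\<^sub>R S0 + x *\<^sub>R S1 + y *\<^sub>R S2 + tvec12 T u p"
    by (simp add: tvec12_add_left tvec12_add_right tvec12_scaleR_left tvec12_scaleR_right
        algebra_simps)
  have "0 \<le> M\<^sup>2 * K"
    using incoh(3) by simp
  then have S1: "norm S1 \<le> M\<^sup>2 * K * \<epsilon>" and S2: "norm S2 \<le> M\<^sup>2 * K * \<epsilon>"
    using norm_offdiag_sum_le[OF incoh(1,3) matn(2,3), where q = p] norm_offdiag_sum_le[OF incoh(2,3) matn(1,3), where q = u]
      mult_left_mono[OF small(2)] mult_left_mono[OF small(1)]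
    unfolding S1_def S2_def by (meson order_trans)+
  have "norm (tvec12 T u p) \<le> tnorm T * norm u * norm p"
    by (rule norm_tvec12_le)
  also have "\<dots> \<le> tnorm T * \<epsilon> * \<epsilon>"
    using small tnorm_nonneg[of T] order_trans[OF norm_ge_zero small(1)] by (intro mult_mono) auto
  finally have "norm (tvec12 T u p) \<le> tnorm T * \<epsilon>\<^sup>2"
    by (simp add: power2_eq_square mult_ac)
  moreover have "norm ((x * y) *\<^sub>R S0) \<le> norm S0" "norm (x *\<^sub>R S1) \<le> norm S1"
    "norm (y *\<^sub>R S2) \<le> norm S2"
    using coeffs by (simp_all add: abs_mult mult_le_one mult_left_le_one_le)
  moreover have "norm ((x * y) *\<^sub>R S0 + x *\<^sub>R S1 + y *\<^sub>R S2 + tvec12 T u p)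
      \<le> norm ((x * y) *\<^sub>R S0) + norm (x *\<^sub>R S1) + norm (y *\<^sub>R S2) + norm (tvec12 T u p)"
    by (intro norm_triangle_le add_mono order_refl)
  ultimately show ?thesis
    unfolding error_eq S0_def[symmetric] using S1 S2 by linarith
qed

lemma tvec12_cpd_near_component:
  fixes w :: "'k::finite \<Rightarrow> real" and a b c :: "'k \<Rightarrow> real^'d::finite"
  assumes "0 < w j"
    and unit: "norm (a j) = 1" "norm (b j) = 1" "norm ah = 1" "norm bh = 1"
    and near: "vdist ah (a j) \<le> \<epsilon>" "vdist bh (b j) \<le> \<epsilon>"
    and incoh: "\<And>i. i \<noteq> j \<Longrightarrow> \<bar>w i * (a i \<bullet> a j)\<bar> \<le> K"
      "\<And>i. i \<noteq> j \<Longrightarrow> \<bar>w i * (b i \<bullet> b j)\<bar> \<le> K" "0 \<le> K"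
    and matn: "matnorm (colmat a) \<le> M" "matnorm (colmat b) \<le> M" "matnorm (colmat c) \<le> M"
  obtains m where "w j - w j * \<epsilon>\<^sup>2 \<le> \<bar>m\<bar>" "\<bar>m\<bar> \<le> w j"
    "norm (tvec12 (cpd w a b c) ah bh - m *\<^sub>R c j)
      \<le> norm (\<Sum>i\<in>UNIV - {j}. (w i * (a i \<bullet> a j) * (b i \<bullet> b j)) *\<^sub>R c i)
         + 2 * M\<^sup>2 * K * \<epsilon> + tnorm (cpd w a b c) * \<epsilon>\<^sup>2"
proof -
  define x y where "x = a j \<bullet> ah" and "y = b j \<bullet> bh"
  define u p where "u = ah - x *\<^sub>R a j" and "p = bh - y *\<^sub>R b j"
  note split_a = orthogonal_split_of_vdist_le[OF unit(3,1) near(1), folded x_def u_def]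
   and split_b = orthogonal_split_of_vdist_le[OF unit(4,2) near(2), folded y_def p_def]
  have x_y: "\<bar>x\<bar> \<le> 1" "\<bar>y\<bar> \<le> 1"
    using Cauchy_Schwarz_ineq2[of "a j" ah] Cauchy_Schwarz_ineq2[of "b j" bh] unit
    by (simp_all add: x_def y_def)
  have "ah = x *\<^sub>R a j + u" "bh = y *\<^sub>R b j + p"
    by (simp_all add: u_def p_def)
  then have "norm (tvec12 (cpd w a b c) ah bh - (w j * x * y) *\<^sub>R c j)
      \<le> norm (\<Sum>i\<in>UNIV - {j}. (w i * (a i \<bullet> a j) * (b i \<bullet> b j)) *\<^sub>R c i)
         + 2 * M\<^sup>2 * K * \<epsilon> + tnorm (cpd w a b c) * \<epsilon>\<^sup>2"
    using norm_tvec12_cpd_perturbed_le[OF unit(1,2) split_a(1) split_b(1) x_y split_a(2) split_b(2)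
        incoh matn] by simp
  moreover have "\<bar>w j * x * y\<bar> = w j * \<bar>x * y\<bar>"
    using \<open>0 < w j\<close> by (simp add: abs_mult)
  then have "w j - w j * \<epsilon>\<^sup>2 \<le> \<bar>w j * x * y\<bar>" "\<bar>w j * x * y\<bar> \<le> w j"
    using mult_left_mono[OF one_minus_le_abs_mult[OF split_a(3) split_b(3)], of "w j"]
      mult_left_mono[of "\<bar>x * y\<bar>" 1 "w j"] x_y \<open>0 < w j\<close>
    by (simp_all add: right_diff_distrib abs_mult mult_le_one)
  ultimately show ?thesis
    using that by blast
qed

lemma ferr_bounds_error:
  assumes "s \<le> \<alpha> * W * sqrt k / d" "t \<le> \<alpha>0 * W"
  shows "s + 2 * (1 + \<alpha>0 * sqrt (k / d))\<^sup>2 * (W * (\<alpha> / sqrt d)) * \<epsilon> + t * \<epsilon>\<^sup>2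
    \<le> W * ferr \<alpha> \<alpha>0 k d \<epsilon>"
  using assms mult_right_mono[OF assms(2) zero_le_power2[of \<epsilon>]]
  by (simp add: ferr_def algebra_simps)

theorem mainTheorem1:
  fixes w :: "'k::finite \<Rightarrow> real"
    and a b c :: "'k \<Rightarrow> real^'d::finite"
    and \<alpha> \<alpha>0 \<epsilon>a \<epsilon>b :: real
    and \<Psi> :: "'d tensor3"
    and j :: 'k
    and ah bh :: "real^'d"
  defines "wmax \<equiv> Max (range w)"
    and "kk \<equiv> CARD('k)"
    and "dd \<equiv> CARD('d)"
    and "\<psi> \<equiv> tnorm \<Psi>"
    and "\<epsilon> \<equiv> max \<epsilon>a \<epsilon>b"
  assumes wpos: "\<forall>i. w i > 0"
    and unit: "\<forall>i. norm (a i) = 1 \<and> norm (b i) = 1 \<and> norm (c i) = 1"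
    and apos: "\<alpha> > 0" and a0pos: "\<alpha>0 > 0"
    and incoh: "\<forall>i i'. i \<noteq> i' \<longrightarrow>
        \<bar>a i \<bullet> a i'\<bar> \<le> \<alpha> / sqrt dd \<and> \<bar>b i \<bullet> b i'\<bar> \<le> \<alpha> / sqrt dd \<and> \<bar>c i \<bullet> c i'\<bar> \<le> \<alpha> / sqrt dd"
    and matn: "matnorm (colmat a) \<le> 1 + \<alpha>0 * sqrt (kk / dd)"
              "matnorm (colmat b) \<le> 1 + \<alpha>0 * sqrt (kk / dd)"
              "matnorm (colmat c) \<le> 1 + \<alpha>0 * sqrt (kk / dd)"
    and Tn: "tnorm (cpd w a b c) \<le> \<alpha>0 * wmax"
    and cross: "\<forall>j'. norm (\<Sum>i\<in>UNIV - {j'}. (w i * (a i \<bullet> a j') * (b i \<bullet> b j')) *\<^sub>R c i)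
                    \<le> \<alpha> * wmax * sqrt kk / dd"
    and ahu: "norm ah = 1" and bhu: "norm bh = 1"
    and dista: "vdist ah (a j) \<le> \<epsilon>a" and distb: "vdist bh (b j) \<le> \<epsilon>b"
    and gap: "w j - w j * \<epsilon>^2 - wmax * ferr \<alpha> \<alpha>0 kk dd \<epsilon> - \<psi> > 0"
  shows "vdist (sgn (tvec12 (tadd (cpd w a b c) \<Psi>) ah bh)) (c j) \<le> (wmax * ferr \<alpha> \<alpha>0 kk dd \<epsilon> + \<psi>)
                          / (w j - w j * \<epsilon>^2 - wmax * ferr \<alpha> \<alpha>0 kk dd \<epsilon> - \<psi>)
     \<and> (vdist (sgn (tvec12 (tadd (cpd w a b c) \<Psi>) ah bh)) (c j) \<le> \<epsilon> \<longrightarrow>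
          \<bar>tform (tadd (cpd w a b c) \<Psi>) ah bh (sgn (tvec12 (tadd (cpd w a b c) \<Psi>) ah bh)) - w j\<bar> \<le> 2 * w j * \<epsilon>^2 + wmax * ferr \<alpha> \<alpha>0 kk dd \<epsilon> + \<psi>)"
proof -
  define T where "T = cpd w a b c"
  have w_abs_le: "\<bar>w i\<bar> \<le> wmax" for i
    unfolding wmax_def using wpos by (simp add: abs_of_pos)
  have "0 < wmax"
    using w_abs_le[of j] wpos[rule_format, of j] abs_ge_self[of "w j"] by linarith
  have K: "\<bar>w i * (a i \<bullet> a j)\<bar> \<le> wmax * (\<alpha> / sqrt dd)"
    "\<bar>w i * (b i \<bullet> b j)\<bar> \<le> wmax * (\<alpha> / sqrt dd)" if "i \<noteq> j" for i
    using incoh that \<open>0 < wmax\<close> unfolding abs_mult by (intro mult_mono[OF w_abs_le]; simp)+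
  have "vdist ah (a j) \<le> \<epsilon>" "vdist bh (b j) \<le> \<epsilon>"
    using dista distb by (auto simp: \<epsilon>_def)
  moreover have unit_j: "norm (a j) = 1" "norm (b j) = 1" "norm (c j) = 1"
    using unit by auto
  moreover have "0 \<le> wmax * (\<alpha> / sqrt dd)"
    using \<open>0 < wmax\<close> apos by simp
  ultimately obtain m where weight: "w j - w j * \<epsilon>\<^sup>2 \<le> \<bar>m\<bar>" "\<bar>m\<bar> \<le> w j"
    and "norm (tvec12 T ah bh - m *\<^sub>R c j)
      \<le> norm (\<Sum>i\<in>UNIV - {j}. (w i * (a i \<bullet> a j) * (b i \<bullet> b j)) *\<^sub>R c i)
         + 2 * (1 + \<alpha>0 * sqrt (kk / dd))\<^sup>2 * (wmax * (\<alpha> / sqrt dd)) * \<epsilon> + tnorm T * \<epsilon>\<^sup>2"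
    using tvec12_cpd_near_component[OF wpos[rule_format] _ _ ahu bhu _ _ K _ matn, folded T_def]
    by blast
  then have "norm (tvec12 T ah bh - m *\<^sub>R c j) \<le> wmax * ferr \<alpha> \<alpha>0 kk dd \<epsilon>"
    using ferr_bounds_error[OF cross[rule_format, of j] Tn[folded T_def], of \<epsilon>] by linarith
  then have "norm (tvec12 (tadd T \<Psi>) ah bh - m *\<^sub>R c j) \<le> wmax * ferr \<alpha> \<alpha>0 kk dd \<epsilon> + \<psi>"
    using norm_tvec12_tadd_diff_le[OF ahu bhu, of T \<Psi> "m *\<^sub>R c j"] \<psi>_def by linarith
  note bounds = scaled_unit_plus_error_bounds[where v = "tvec12 (tadd T \<Psi>) ah bh",
      OF _ unit_j(3) this weight zero_le_power2]
  show ?thesis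
    using bounds gap
    by (simp add: T_def tform_sgn_tvec12 diff_diff_eq add.assoc)
qed

end
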